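(* Let $X$ be a compact metric space, $f:X\to X$ a continuous minimal map, $H$ the homeo-part of $f$, and $P$ a residual subset of $X$. Then there is a set $R\subseteq X$ such that (1) $R\subseteq P\cap H$ and $R$ is residual in $X$; (2) $f(R)=R=f^{-1}(R)$; (3) both $f|_R$ and $(f|_R)^{-1}$ are minimal homeomorphisms $R\to R$.
   Context: Minimal: every forward orbit dense (for the compact space $X$, equivalently no proper nonempty closed invariant subset); for the (possibly non-compact) $R$, minimality of a map means every forward orbit is dense in $R$. Homeo-part of $f$: the set $H$ of all $x_0\in X$ whose full orbit $\{x\in X:\exists i,j\ge0,\ f^i(x)=f^j(x_0)\}$ has the form $\{\dots,x_{-1},x_0,x_1,\dots\}$ with $f(x_n)=x_{n+1}$ for all integers $n$. Residual: complement of a countable union of nowhere dense sets. *)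

theory Defs
  imports "HOL-Analysis.Analysis"
begin

definition nowhere_dense_in :: "'a::topological_space set \<Rightarrow> 'a set \<Rightarrow> bool" where
  "nowhere_dense_in X A \<longleftrightarrow> A \<subseteq> X \<and>
     (top_of_set X) interior_of ((top_of_set X) closure_of A) = {}"

definition residual_in :: "'a::topological_space set \<Rightarrow> 'a set \<Rightarrow> bool" where
  "residual_in X A \<longleftrightarrow> (\<exists>\<F>. countable \<F> \<and> (\<forall>N\<in>\<F>. nowhere_dense_in X N) \<and> A = X - \<Union>\<F>)"

definition minimal_on :: "'a::topological_space set \<Rightarrow> ('a \<Rightarrow> 'a) \<Rightarrow> bool" where
  "minimal_on S g \<longleftrightarrow> g ` S \<subseteq> S \<and>
     (\<forall>x\<in>S. (top_of_set S) closure_of {(g ^^ n) x | n. True} = S)"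

definition full_orbit :: "'a set \<Rightarrow> ('a \<Rightarrow> 'a) \<Rightarrow> 'a \<Rightarrow> 'a set" where
  "full_orbit X f x0 = {x\<in>X. \<exists>i j. (f ^^ i) x = (f ^^ j) x0}"

definition homeo_part :: "'a set \<Rightarrow> ('a \<Rightarrow> 'a) \<Rightarrow> 'a set" where
  "homeo_part X f = {x0\<in>X. \<exists>x :: int \<Rightarrow> 'a. x 0 = x0 \<and> (\<forall>n. f (x n) = x (n + 1)) \<and>
       full_orbit X f x0 = range x}"

end

theory Submission
  imports Defs
begin

text \<open>
  By minimality, f maps no proper closed subset of X onto X.  Hence f-images and f-preimages of
  nowhere dense sets are nowhere dense, and for every \<open>e > 0\<close> the points having two preimages
  at distance at least e form a nowhere dense set.  So the points of P with a unique preimage form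
  a residual set Q.  The set R of points whose full orbit lies in Q is residual as well: its complement
  is covered by the meagre sets \<open>(f\<^sup>j)\<^sup>-\<^sup>1(f\<^sup>i(X - Q))\<close>.
  R is completely invariant and f is injective on it; as R is saturated and X compact, f restricted
  to R is a closed map, hence a homeomorphism of R.  Forward orbits are dense by minimality, and
  backward orbits are dense because their \<open>\<omega>\<close>-limit sets are nonempty, closed and forward invariant.
\<close>

definition meagre_in :: "'a::topological_space set \<Rightarrow> 'a set \<Rightarrow> bool" where
  "meagre_in X M \<longleftrightarrow> (\<exists>\<F>. countable \<F> \<and> (\<forall>N\<in>\<F>. nowhere_dense_in X N) \<and> M \<subseteq> \<Union>\<F>)"

lemma nowhere_dense_in_iff:
  "nowhere_dense_in X A \<longleftrightarrow> A \<subseteq> X \<and> (\<forall>U. openin (top_of_set X) U \<and> U \<noteq> {} \<longrightarrow>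
      (\<exists>V. openin (top_of_set X) V \<and> V \<noteq> {} \<and> V \<subseteq> U \<and> V \<inter> A = {}))"
proof -
  let ?T = "top_of_set X"
  have "U - ?T closure_of A \<noteq> {} \<longleftrightarrow> (\<exists>V. openin ?T V \<and> V \<noteq> {} \<and> V \<subseteq> U \<and> V \<inter> A = {})"
    if U: "openin ?T U" for U
  proof
    assume "U - ?T closure_of A \<noteq> {}"
    moreover have "openin ?T (U - ?T closure_of A)" using U by (intro openin_diff closedin_closure_of)
    moreover have "A \<inter> U \<subseteq> ?T closure_of A"
      using closure_of_subset_Int[of ?T A] openin_subset[OF U] by auto
    ultimately show "\<exists>V. openin ?T V \<and> V \<noteq> {} \<and> V \<subseteq> U \<and> V \<inter> A = {}" by blast
  next
    assume "\<exists>V. openin ?T V \<and> V \<noteq> {} \<and> V \<subseteq> U \<and> V \<inter> A = {}"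
    then obtain V where "openin ?T V" "V \<noteq> {}" "V \<subseteq> U" "V \<inter> ?T closure_of A = {}"
      by (metis openin_Int_closure_of_eq_empty)
    then show "U - ?T closure_of A \<noteq> {}" by blast
  qed
  then show ?thesis unfolding nowhere_dense_in_def interior_of_eq_empty_alt by (simp cong: conj_cong)
qed

lemma nowhere_dense_in_subset: "nowhere_dense_in X N \<Longrightarrow> M \<subseteq> N \<Longrightarrow> nowhere_dense_in X M"
  unfolding nowhere_dense_in_iff by (meson disjoint_iff subset_iff)

lemma residual_in_iff_meagre: "residual_in X A \<longleftrightarrow> A \<subseteq> X \<and> meagre_in X (X - A)"
proof
  assume "residual_in X A"
  then show "A \<subseteq> X \<and> meagre_in X (X - A)"
    unfolding residual_in_def meagre_in_def by blast
next
  assume "A \<subseteq> X \<and> meagre_in X (X - A)"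
  then obtain \<F> where A: "A \<subseteq> X" and \<F>: "countable \<F>" "\<forall>N\<in>\<F>. nowhere_dense_in X N" "X - A \<subseteq> \<Union>\<F>"
    unfolding meagre_in_def by blast
  let ?G = "(\<lambda>N. N - A) ` \<F>"
  have "\<forall>N\<in>?G. nowhere_dense_in X N"
    using \<F>(2) nowhere_dense_in_subset by blast
  moreover have "A = X - \<Union>?G" using A \<F>(3) by auto
  ultimately show "residual_in X A" unfolding residual_in_def using \<F>(1) by blast
qed

lemma meagre_in_subset: "meagre_in X M \<Longrightarrow> M' \<subseteq> M \<Longrightarrow> meagre_in X M'"
  unfolding meagre_in_def by (meson order_trans)

lemma meagre_in_if_nowhere_dense: "nowhere_dense_in X N \<Longrightarrow> meagre_in X N"
  unfolding meagre_in_def by (intro exI[of _ "{N}"]) auto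

lemma meagre_in_UN:
  assumes "countable I" "\<And>i. i \<in> I \<Longrightarrow> meagre_in X (M i)"
  shows "meagre_in X (\<Union>i\<in>I. M i)"
proof -
  obtain \<F> where \<F>: "\<And>i. i \<in> I \<Longrightarrow> countable (\<F> i)"
    "\<And>i. i \<in> I \<Longrightarrow> \<forall>N\<in>\<F> i. nowhere_dense_in X N" "\<And>i. i \<in> I \<Longrightarrow> M i \<subseteq> \<Union>(\<F> i)"
    using assms(2) unfolding meagre_in_def by metis
  have "countable (\<Union>i\<in>I. \<F> i)" using assms(1) \<F>(1) by blast
  moreover have "\<forall>N\<in>(\<Union>i\<in>I. \<F> i). nowhere_dense_in X N" using \<F>(2) by blast
  moreover have "(\<Union>i\<in>I. M i) \<subseteq> \<Union>(\<Union>i\<in>I. \<F> i)" using \<F>(3) by blast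
  ultimately show ?thesis unfolding meagre_in_def by blast
qed

lemma meagre_in_Un: "meagre_in X M \<Longrightarrow> meagre_in X M' \<Longrightarrow> meagre_in X (M \<union> M')"
  using meagre_in_UN[of "UNIV :: bool set" X "\<lambda>b. if b then M else M'"] by (simp add: UNIV_bool Un_commute)

lemma residual_in_Diff_meagre:
  assumes "residual_in X P" "meagre_in X M"
  shows "residual_in X (P - M)"
proof -
  have "P \<subseteq> X" "meagre_in X ((X - P) \<union> M)"
    using assms by (simp_all add: residual_in_iff_meagre meagre_in_Un)
  moreover have "meagre_in X (X - (P - M))" using calculation(2) by (rule meagre_in_subset) blast
  ultimately show ?thesis by (auto simp: residual_in_iff_meagre)
qed

lemma meagre_in_image:
  assumes "\<And>N. nowhere_dense_in X N \<Longrightarrow> nowhere_dense_in X (h ` N)" "meagre_in X M"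
  shows "meagre_in X (h ` M)"
proof -
  obtain \<F> where \<F>: "countable \<F>" "\<forall>N\<in>\<F>. nowhere_dense_in X N" "M \<subseteq> \<Union>\<F>"
    using assms(2) unfolding meagre_in_def by blast
  let ?G = "(`) h ` \<F>"
  have "countable ?G" using \<F>(1) by blast
  moreover have "\<forall>N\<in>?G. nowhere_dense_in X N" using \<F>(2) assms(1) by blast
  moreover have "h ` M \<subseteq> \<Union>?G" using \<F>(3) by blast
  ultimately show ?thesis unfolding meagre_in_def by (intro exI[of _ ?G] conjI)
qed

lemma meagre_in_vimage:
  assumes "\<And>N. nowhere_dense_in X N \<Longrightarrow> nowhere_dense_in X {x\<in>X. h x \<in> N}" "meagre_in X M"
  shows "meagre_in X {x\<in>X. h x \<in> M}"
proof -
  obtain \<F> where \<F>: "countable \<F>" "\<forall>N\<in>\<F>. nowhere_dense_in X N" "M \<subseteq> \<Union>\<F>"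
    using assms(2) unfolding meagre_in_def by blast
  let ?G = "(\<lambda>N. {x\<in>X. h x \<in> N}) ` \<F>"
  have "countable ?G" using \<F>(1) by blast
  moreover have "\<forall>N\<in>?G. nowhere_dense_in X N" using \<F>(2) assms(1) by blast
  moreover have "{x\<in>X. h x \<in> M} \<subseteq> \<Union>?G" using \<F>(3) by blast
  ultimately show ?thesis unfolding meagre_in_def by (intro exI[of _ ?G] conjI)
qed

lemma full_orbit_apply: "full_orbit X f (f x) = full_orbit X f x"
proof -
  have "(\<exists>i j. (f ^^ i) z = (f ^^ j) (f x)) \<longleftrightarrow> (\<exists>i j. (f ^^ i) z = (f ^^ j) x)" for z
  proof
    assume "\<exists>i j. (f ^^ i) z = (f ^^ j) (f x)"
    then obtain i j where "(f ^^ i) z = (f ^^ Suc j) x" by (auto simp: funpow_swap1)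
    then show "\<exists>i j. (f ^^ i) z = (f ^^ j) x" by blast
  next
    assume "\<exists>i j. (f ^^ i) z = (f ^^ j) x"
    then obtain i j where "(f ^^ i) z = (f ^^ j) x" by blast
    then have "(f ^^ Suc i) z = f ((f ^^ j) x)" by simp
    then have "(f ^^ Suc i) z = (f ^^ j) (f x)" by (simp only: funpow_swap1)
    then show "\<exists>i j. (f ^^ i) z = (f ^^ j) (f x)" by blast
  qed
  then show ?thesis unfolding full_orbit_def by blast
qed

lemma self_in_full_orbit: "x \<in> X \<Longrightarrow> x \<in> full_orbit X f x"
  unfolding full_orbit_def by (metis (mono_tags) mem_Collect_eq)

lemma funpow_mem: "f ` S \<subseteq> S \<Longrightarrow> x \<in> S \<Longrightarrow> (f ^^ n) x \<in> S"
  by (induction n) auto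

lemma funpow_chain:
  assumes "\<And>n. f (x n) = x (n + 1)"
  shows "(f ^^ k) (x n) = x (n + int k)"
  by (induction k) (simp_all add: assms algebra_simps)

lemma saturated_mem_if_funpow_mem:
  assumes "f ` X \<subseteq> X" "\<And>x. x \<in> X \<Longrightarrow> f x \<in> R \<Longrightarrow> x \<in> R" "z \<in> X" "(f ^^ i) z \<in> R"
  shows "z \<in> R"
  using assms(3,4)
proof (induction i arbitrary: z)
  case (Suc i)
  have "(f ^^ i) (f z) \<in> R" using Suc.prems(2) by (simp add: funpow_swap1)
  then have "f z \<in> R" using Suc.IH Suc.prems(1) assms(1) by blast
  then show ?case using assms(2) Suc.prems(1) by blast
qed simp

lemma saturated_homeomorphism_subset_homeo_part:
  assumes fX: "f ` X \<subseteq> X" and RX: "R \<subseteq> X" and sat: "\<And>x. x \<in> X \<Longrightarrow> f x \<in> R \<Longrightarrow> x \<in> R"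
    and hom: "homeomorphism R R f g"
  shows "R \<subseteq> homeo_part X f"
proof
  fix x0 assume x0: "x0 \<in> R"
  define ch where "ch n = (if 0 \<le> n then (f ^^ nat n) x0 else (g ^^ nat (- n)) x0)" for n :: int
  have fR: "f ` R \<subseteq> R" and gR: "g ` R \<subseteq> R"
    using hom by (simp_all add: homeomorphism_image1 homeomorphism_image2)
  have ch_R: "ch n \<in> R" for n
    unfolding ch_def using funpow_mem[OF fR x0] funpow_mem[OF gR x0] by simp
  have ch_step: "f (ch n) = ch (n + 1)" for n
  proof (cases "0 \<le> n")
    case True
    then show ?thesis unfolding ch_def by (simp add: nat_add_distrib)
  next
    case False
    then have "nat (- n) = Suc (nat (- n - 1))" by (simp add: Suc_nat_eq_nat_zadd1)
    moreover have "ch (n + 1) = (g ^^ nat (- n - 1)) x0" unfolding ch_def using False by auto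
    ultimately have "ch n = g (ch (n + 1))" unfolding ch_def using False by simp
    then show ?thesis using homeomorphism_apply2[OF hom ch_R] by simp
  qed
  have ch_funpow: "(f ^^ k) (ch n) = ch (n + int k)" for k n
    by (rule funpow_chain) (rule ch_step)
  have inj: "inj_on (f ^^ k) R" for k
    using bij_betw_funpow[of f R k] hom
    by (metis bij_betw_def homeomorphism_apply1 homeomorphism_image1 inj_on_inverseI)
  have "full_orbit X f x0 \<subseteq> range ch"
  proof
    fix z assume "z \<in> full_orbit X f x0"
    then obtain i j where z: "z \<in> X" "(f ^^ i) z = ch (int j)"
      unfolding full_orbit_def ch_def by auto
    have "z \<in> R" using saturated_mem_if_funpow_mem[OF fX sat z(1)] z(2) ch_R by metis
    moreover have "(f ^^ i) (ch (int j - int i)) = (f ^^ i) z" using ch_funpow z(2) by simp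
    ultimately have "z = ch (int j - int i)" using inj_onD[OF inj] ch_R by metis
    then show "z \<in> range ch" by blast
  qed
  moreover have "range ch \<subseteq> full_orbit X f x0"
  proof
    fix z assume "z \<in> range ch"
    then obtain n where z: "z = ch n" by blast
    have "(f ^^ nat (- n)) z = (f ^^ nat n) x0"
    proof (cases "0 \<le> n")
      case True
      then show ?thesis unfolding z ch_def by simp
    next
      case False
      then have "(f ^^ nat (- n)) z = ch 0" unfolding z ch_funpow by simp
      then show ?thesis using False unfolding ch_def by simp
    qed
    then show "z \<in> full_orbit X f x0" unfolding full_orbit_def using z ch_R RX by blast
  qed
  moreover have "ch 0 = x0" unfolding ch_def by simp
  ultimately show "x0 \<in> homeo_part X f"
    unfolding homeo_part_def using x0 RX ch_step by blast
qed

lemma saturated_subset_image_eq: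
  assumes "f ` X = X" "R \<subseteq> X" "\<And>x. x \<in> R \<Longrightarrow> f x \<in> R" "\<And>x. x \<in> X \<Longrightarrow> f x \<in> R \<Longrightarrow> x \<in> R"
  shows "f ` R = R"
proof
  show "f ` R \<subseteq> R" using assms(3) by blast
  show "R \<subseteq> f ` R"
  proof
    fix y assume y: "y \<in> R"
    then have "y \<in> f ` X" using assms(1,2) by auto
    then obtain x where "x \<in> X" "y = f x" by blast
    then show "y \<in> f ` R" using assms(4) y by blast
  qed
qed

lemma closedin_image_saturated:
  fixes f :: "'a::t2_space \<Rightarrow> 'a"
  assumes "compact X" "continuous_on X f" "R \<subseteq> X" "f ` R = R"
    and sat: "\<And>x. x \<in> X \<Longrightarrow> f x \<in> R \<Longrightarrow> x \<in> R" and U: "closedin (top_of_set R) U"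
  shows "closedin (top_of_set R) (f ` U)"
proof -
  obtain C where C: "closed C" "U = R \<inter> C" using U unfolding closedin_closed by metis
  have "continuous_on (X \<inter> C) f" using assms(2) by (rule continuous_on_subset) blast
  moreover have "compact (X \<inter> C)" using assms(1) C(1) by (rule compact_Int_closed)
  ultimately have "compact (f ` (X \<inter> C))" by (rule compact_continuous_image)
  then have "closedin (top_of_set R) (R \<inter> f ` (X \<inter> C))"
    by (intro closedin_closed_Int compact_imp_closed)
  moreover have "f ` U = R \<inter> f ` (X \<inter> C)" using assms(3,4) sat C(2) by auto
  ultimately show ?thesis by simp
qed

lemma minimal_on_if_dense_orbits:
  assumes "R \<subseteq> X" "g ` R \<subseteq> R" "\<And>x. x \<in> R \<Longrightarrow> X \<subseteq> closure {(g ^^ n) x | n. True}"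
  shows "minimal_on R g"
  unfolding minimal_on_def
proof (intro conjI ballI)
  fix x assume x: "x \<in> R"
  have "{(g ^^ n) x | n. True} \<subseteq> R" using funpow_mem[OF assms(2) x] by blast
  then show "top_of_set R closure_of {(g ^^ n) x | n. True} = R"
    using assms(1) assms(3)[OF x] by (auto simp: closure_of_subtopology Int_absorb1)
qed (fact assms(2))

lemma compact_decseq_closed_Inter_nonempty:
  assumes "compact S" "\<And>n. closed (T n)" "\<And>n. T n \<subseteq> S" "\<And>n. T n \<noteq> {}" "decseq T"
  shows "(\<Inter>n. T n) \<noteq> {}"
  by (rule compact_space_imp_nest[of "top_of_set S"])
    (use assms in \<open>auto simp: closed_subset compact_space_subtopology\<close>)

locale minimal_system =
  fixes X :: "'a::metric_space set" and f :: "'a \<Rightarrow> 'a"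
  assumes compact: "compact X" and continuous: "continuous_on X f"
    and maps_to: "f ` X \<subseteq> X" and minimal: "minimal_on X f"
begin

lemma closed: "closed X"
  using compact by (rule compact_imp_closed)

lemma orbit_dense:
  assumes "x \<in> X" shows "X \<subseteq> closure {(f ^^ n) x | n. True}"
proof -
  let ?O = "{(f ^^ n) x | n. True}"
  have "top_of_set X closure_of ?O = X" using minimal assms by (simp add: minimal_on_def)
  then have "X \<inter> closure (X \<inter> ?O) = X" by (simp add: closure_of_subtopology)
  then have "X \<subseteq> closure (X \<inter> ?O)" by (metis Int_lower2)
  also have "\<dots> \<subseteq> closure ?O" by (rule closure_mono) blast
  finally show ?thesis .
qed

lemma closed_invariant_subset_eq:
  assumes "closed A" "A \<subseteq> X" "A \<noteq> {}" "f ` A \<subseteq> A"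
  shows "A = X"
proof -
  obtain a where a: "a \<in> A" using assms(3) by blast
  then have "{(f ^^ n) a | n. True} \<subseteq> A" using funpow_mem[OF assms(4)] by blast
  then have "closure {(f ^^ n) a | n. True} \<subseteq> A" using assms(1) by (rule closure_minimal)
  then show ?thesis using orbit_dense[of a] a assms(2) by blast
qed

lemma image_eq: "f ` X = X"
proof (cases "X = {}")
  case False
  have "closed (f ` X)" by (intro compact_imp_closed compact_continuous_image continuous compact)
  then show ?thesis using False maps_to by (intro closed_invariant_subset_eq) auto
qed simp

lemma closed_subset_eq_if_image_eq:
  assumes K: "closed K" "K \<subseteq> X" and onto: "f ` K = X"
  shows "K = X"
proof (cases "X = {}")
  case False
  \<comment> \<open>\<open>T (Suc n)\<close> consists of the points whose first \<open>n + 1\<close> iterates lie in K.\<close>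
  define T where "T n = ((\<lambda>C. {x\<in>K. f x \<in> C}) ^^ n) X" for n
  have T_Suc: "T (Suc n) = {x\<in>K. f x \<in> T n}" for n unfolding T_def by simp
  have T_X: "T n \<subseteq> X" for n by (cases n) (use K(2) in \<open>auto simp: T_def\<close>)
  have dec: "decseq T" unfolding decseq_Suc_iff
  proof
    show "T (Suc n) \<subseteq> T n" for n by (induction n) (use K(2) in \<open>auto simp: T_Suc T_def\<close>)
  qed
  have T_closed: "closed (T n)" for n
  proof (induction n)
    case (Suc n)
    have "T (Suc n) = K \<inter> (X \<inter> f -` T n)" using K(2) unfolding T_Suc by auto
    then show ?case using continuous_closed_preimage[OF continuous closed Suc.IH] K(1) by auto
  qed (simp add: T_def closed)
  have T_ne: "T n \<noteq> {}" for n
  proof (induction n)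
    case (Suc n)
    have "T n \<subseteq> f ` T (Suc n)" using T_X onto unfolding T_Suc by blast
    then show ?case using Suc.IH by blast
  qed (simp add: T_def False)
  let ?A = "\<Inter>n. T n"
  have "?A = X"
  proof (rule closed_invariant_subset_eq)
    show "closed ?A" using T_closed by (simp add: closed_INT)
    show "?A \<subseteq> X" using T_X by blast
    show "?A \<noteq> {}" by (rule compact_decseq_closed_Inter_nonempty[OF compact T_closed T_X T_ne dec])
    show "f ` ?A \<subseteq> ?A" using T_Suc by blast
  qed
  moreover have "?A \<subseteq> K" using T_Suc[of 0] by blast
  ultimately show ?thesis using K(2) by blast
qed (use K in blast)

lemma openin_vimage: "openin (top_of_set X) W \<Longrightarrow> openin (top_of_set X) {x\<in>X. f x \<in> W}"
  using continuous_openin_preimage[OF continuous, of X W] maps_to by (simp add: Int_def image_subset_iff_funcset)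

lemma openin_image_fibres_inside:
  assumes U: "openin (top_of_set X) U" "U \<noteq> {}"
  obtains V where "openin (top_of_set X) V" "V \<noteq> {}" "V \<subseteq> f ` U"
    "\<And>x. x \<in> X \<Longrightarrow> f x \<in> V \<Longrightarrow> x \<in> U"
proof -
  let ?K = "X - U"
  have "closed ?K" using closedin_closed_trans[OF closedin_diff[OF closedin_topspace U(1)]] closed by simp
  then have "compact (f ` ?K)"
    by (metis Diff_subset compact compact_Int_closed compact_continuous_image continuous
        continuous_on_subset inf.absorb_iff2)
  then have "closedin (top_of_set X) (f ` ?K)"
    using maps_to by (auto intro: closed_subset compact_imp_closed)
  then have V_open: "openin (top_of_set X) (X - f ` ?K)" by (simp add: openin_diff)
  have "f ` ?K \<noteq> X"
    using closed_subset_eq_if_image_eq[OF \<open>closed ?K\<close>] U openin_imp_subset by blast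
  then have V_ne: "X - f ` ?K \<noteq> {}" using maps_to by blast
  have V_sub: "X - f ` ?K \<subseteq> f ` U" using image_eq by blast
  have V_fibres: "\<And>x. x \<in> X \<Longrightarrow> f x \<in> X - f ` ?K \<Longrightarrow> x \<in> U" by blast
  show ?thesis by (rule that[OF V_open V_ne V_sub V_fibres])
qed

lemma nowhere_dense_in_vimage:
  assumes N: "nowhere_dense_in X N"
  shows "nowhere_dense_in X {x\<in>X. f x \<in> N}"
  unfolding nowhere_dense_in_iff
proof (intro conjI allI impI)
  fix U assume "openin (top_of_set X) U \<and> U \<noteq> {}"
  then have U: "openin (top_of_set X) U" "U \<noteq> {}" by simp_all
  then obtain V where V: "openin (top_of_set X) V" "V \<noteq> {}" "V \<subseteq> f ` U"
    "\<And>x. x \<in> X \<Longrightarrow> f x \<in> V \<Longrightarrow> x \<in> U"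
    by (rule openin_image_fibres_inside) blast
  obtain W where W: "openin (top_of_set X) W" "W \<noteq> {}" "W \<subseteq> V" "W \<inter> N = {}"
    using N V(1,2) unfolding nowhere_dense_in_iff by blast
  have "openin (top_of_set X) {x\<in>X. f x \<in> W}" using W(1) by (rule openin_vimage)
  moreover have "{x\<in>X. f x \<in> W} \<noteq> {}" using W(2,3) V(3) U openin_imp_subset by blast
  moreover have "{x\<in>X. f x \<in> W} \<subseteq> U" using W(3) V(4) by blast
  moreover have "{x\<in>X. f x \<in> W} \<inter> {x\<in>X. f x \<in> N} = {}" using W(4) by blast
  ultimately show "\<exists>V. openin (top_of_set X) V \<and> V \<noteq> {} \<and> V \<subseteq> U \<and> V \<inter> {x\<in>X. f x \<in> N} = {}"
    by blast
qed blast

lemma nowhere_dense_in_image: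
  assumes N: "nowhere_dense_in X N"
  shows "nowhere_dense_in X (f ` N)"
  unfolding nowhere_dense_in_iff
proof (intro conjI allI impI)
  have NX: "N \<subseteq> X" using N by (simp add: nowhere_dense_in_def)
  then show "f ` N \<subseteq> X" using maps_to by (meson image_mono order_trans)
  fix U assume "openin (top_of_set X) U \<and> U \<noteq> {}"
  then have U: "openin (top_of_set X) U" "U \<noteq> {}" by simp_all
  have "openin (top_of_set X) {x\<in>X. f x \<in> U}" using U(1) by (rule openin_vimage)
  moreover have "U \<subseteq> f ` X" using openin_imp_subset[OF U(1)] image_eq by simp
  then have "{x\<in>X. f x \<in> U} \<noteq> {}" using U(2) by blast
  ultimately obtain W where W: "openin (top_of_set X) W" "W \<noteq> {}" "W \<subseteq> {x\<in>X. f x \<in> U}" "W \<inter> N = {}"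
    using N unfolding nowhere_dense_in_iff by blast
  obtain V where V: "openin (top_of_set X) V" "V \<noteq> {}" "V \<subseteq> f ` W"
    "\<And>x. x \<in> X \<Longrightarrow> f x \<in> V \<Longrightarrow> x \<in> W"
    by (rule openin_image_fibres_inside[OF W(1,2)]) blast
  have "V \<subseteq> U" using V(3) W(3) by blast
  moreover have "V \<inter> f ` N = {}" using V(4) W(4) NX by blast
  ultimately show "\<exists>V. openin (top_of_set X) V \<and> V \<noteq> {} \<and> V \<subseteq> U \<and> V \<inter> f ` N = {}"
    using V(1,2) by blast
qed

lemma nowhere_dense_in_wide_fibres:
  assumes "e > 0"
  shows "nowhere_dense_in X {y. \<exists>x\<in>X. \<exists>x'\<in>X. f x = y \<and> f x' = y \<and> e \<le> dist x x'}"
    (is "nowhere_dense_in X ?D")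
  unfolding nowhere_dense_in_iff
proof (intro conjI allI impI)
  show "?D \<subseteq> X" using maps_to by blast
  fix U assume "openin (top_of_set X) U \<and> U \<noteq> {}"
  then have U: "openin (top_of_set X) U" "U \<noteq> {}" by simp_all
  have "U \<subseteq> f ` X" using openin_imp_subset[OF U(1)] image_eq by simp
  then obtain x0 where x0: "x0 \<in> X" "f x0 \<in> U" using U(2) by blast
  let ?U' = "{x\<in>X. f x \<in> U} \<inter> (X \<inter> ball x0 (e/2))"
  have "openin (top_of_set X) ?U'"
    using U(1) by (intro openin_Int openin_vimage openin_open_Int open_ball)
  moreover have "?U' \<noteq> {}" using x0 assms by auto
  ultimately obtain V where V: "openin (top_of_set X) V" "V \<noteq> {}" "V \<subseteq> f ` ?U'"
    "\<And>x. x \<in> X \<Longrightarrow> f x \<in> V \<Longrightarrow> x \<in> ?U'"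
    by (rule openin_image_fibres_inside) blast
  have "dist x x' < e" if "x \<in> X" "x' \<in> X" "f x \<in> V" "f x' \<in> V" for x x'
  proof -
    have "x \<in> ball x0 (e/2)" "x' \<in> ball x0 (e/2)" using V(4) that by blast+
    then show ?thesis by (metis dist_commute dist_triangle_half_l mem_ball)
  qed
  then have "V \<inter> ?D = {}" by fastforce
  moreover have "V \<subseteq> U" using V(3) by blast
  ultimately show "\<exists>V. openin (top_of_set X) V \<and> V \<noteq> {} \<and> V \<subseteq> U \<and> V \<inter> ?D = {}"
    using V(1,2) by blast
qed

lemma meagre_in_vimage_funpow:
  assumes "meagre_in X M" shows "meagre_in X {x\<in>X. (f ^^ n) x \<in> M}"
proof (induction n)
  case 0
  show ?case using assms by (rule meagre_in_subset) auto
next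
  case (Suc n)
  have "{x\<in>X. (f ^^ Suc n) x \<in> M} = {x\<in>X. f x \<in> {y\<in>X. (f ^^ n) y \<in> M}}"
    using maps_to by (auto simp: funpow_swap1)
  then show ?case using meagre_in_vimage[OF nowhere_dense_in_vimage Suc.IH] by simp
qed

lemma meagre_in_image_funpow:
  assumes "meagre_in X M" shows "meagre_in X ((f ^^ n) ` M)"
proof (induction n)
  case 0
  show ?case using assms by simp
next
  case (Suc n)
  show ?case using meagre_in_image[OF nowhere_dense_in_image Suc.IH] by (simp add: image_comp)
qed

lemma meagre_in_non_injective_points:
  "meagre_in X {y. \<exists>x\<in>X. \<exists>x'\<in>X. x \<noteq> x' \<and> f x = y \<and> f x' = y}"
proof (rule meagre_in_subset)
  let ?D = "\<lambda>e. {y. \<exists>x\<in>X. \<exists>x'\<in>X. f x = y \<and> f x' = y \<and> e \<le> dist x x'}"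
  show "meagre_in X (\<Union>m. ?D (inverse (real (Suc m))))"
    by (intro meagre_in_UN meagre_in_if_nowhere_dense nowhere_dense_in_wide_fibres) auto
  show "{y. \<exists>x\<in>X. \<exists>x'\<in>X. x \<noteq> x' \<and> f x = y \<and> f x' = y} \<subseteq> (\<Union>m. ?D (inverse (real (Suc m))))"
  proof
    fix y assume "y \<in> {y. \<exists>x\<in>X. \<exists>x'\<in>X. x \<noteq> x' \<and> f x = y \<and> f x' = y}"
    then obtain x x' where x: "x \<in> X" "x' \<in> X" "x \<noteq> x'" "f x = y" "f x' = y" by blast
    then obtain m where "inverse (real (Suc m)) < dist x x'"
      using reals_Archimedean[of "dist x x'"] by auto
    then show "y \<in> (\<Union>m. ?D (inverse (real (Suc m))))" using x by (auto intro: less_imp_le)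
  qed
qed

lemma residual_in_full_orbit_subset:
  assumes "residual_in X Q"
  shows "residual_in X {x\<in>X. full_orbit X f x \<subseteq> Q}"
proof -
  have Q: "meagre_in X (X - Q)" using assms by (simp add: residual_in_iff_meagre)
  have "meagre_in X (\<Union>i. \<Union>j. {x\<in>X. (f ^^ j) x \<in> (f ^^ i) ` (X - Q)})"
    by (intro meagre_in_UN meagre_in_vimage_funpow meagre_in_image_funpow Q) auto
  moreover have "X - {x\<in>X. full_orbit X f x \<subseteq> Q} \<subseteq> (\<Union>i. \<Union>j. {x\<in>X. (f ^^ j) x \<in> (f ^^ i) ` (X - Q)})"
  proof
    fix x assume "x \<in> X - {x\<in>X. full_orbit X f x \<subseteq> Q}"
    then obtain z i j where x: "x \<in> X" and "z \<in> X - Q" "(f ^^ i) z = (f ^^ j) x"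
      unfolding full_orbit_def by blast
    then have "(f ^^ j) x \<in> (f ^^ i) ` (X - Q)" by (metis imageI)
    then show "x \<in> (\<Union>i. \<Union>j. {x\<in>X. (f ^^ j) x \<in> (f ^^ i) ` (X - Q)})" using x by blast
  qed
  ultimately show ?thesis unfolding residual_in_iff_meagre by (auto intro: meagre_in_subset)
qed

lemma backward_orbit_dense:
  assumes y_X: "\<And>n. y n \<in> X" and y_pre: "\<And>n. f (y (Suc n)) = y n"
  shows "X \<subseteq> closure (range y)"
proof -
  define T where "T k = closure (y ` {k..})" for k
  have T_X: "T k \<subseteq> X" for k
    unfolding T_def using y_X closed by (intro closure_minimal) auto
  have T_closed: "closed (T k)" for k unfolding T_def by simp
  have T_ne: "T k \<noteq> {}" for k unfolding T_def closure_eq_empty by blast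
  have dec: "decseq T" unfolding decseq_def T_def by (auto intro!: closure_mono image_mono)
  have T_step: "f ` T (Suc k) \<subseteq> T k" for k
  proof -
    have sub: "f ` y ` {Suc k..} \<subseteq> y ` {k..}"
    proof
      fix z assume "z \<in> f ` y ` {Suc k..}"
      then obtain m where "Suc k \<le> m" "z = f (y m)" by blast
      then have "z = y (m - 1)" "k \<le> m - 1" using y_pre[of "m - 1"] by auto
      then show "z \<in> y ` {k..}" by blast
    qed
    have "continuous_on (closure (y ` {Suc k..})) f"
      using continuous_on_subset[OF continuous T_X[of "Suc k"]] unfolding T_def .
    then have "f ` closure (y ` {Suc k..}) \<subseteq> closure (y ` {k..})"
      using closed_closure by (rule image_closure_subset) (use sub closure_subset in blast)
    then show ?thesis unfolding T_def .
  qed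
  let ?A = "\<Inter>k. T k"
  have "?A = X"
  proof (rule closed_invariant_subset_eq)
    show "closed ?A" using T_closed by (simp add: closed_INT)
    show "?A \<subseteq> X" using T_X by blast
    show "?A \<noteq> {}" by (rule compact_decseq_closed_Inter_nonempty[OF compact T_closed T_X T_ne dec])
    show "f ` ?A \<subseteq> ?A" using T_step by blast
  qed
  moreover have "?A \<subseteq> T 0" by blast
  moreover have "T 0 = closure (range y)" by (simp add: T_def atLeast_0)
  ultimately show ?thesis by blast
qed

lemma saturated_restriction_minimal_homeomorphism:
  assumes RX: "R \<subseteq> X" and sat: "\<And>x. x \<in> X \<Longrightarrow> f x \<in> R \<Longrightarrow> x \<in> R"
    and onto: "f ` R = R" and inj: "inj_on f R"
  obtains g where "homeomorphism R R f g" "minimal_on R f" "minimal_on R g"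
proof -
  obtain g where hom: "homeomorphism R R f g"
    by (rule homeomorphism_injective_closed_map[OF continuous_on_subset[OF continuous RX] onto inj
          closedin_image_saturated[OF compact continuous RX onto sat]])
  have "minimal_on R f"
    by (rule minimal_on_if_dense_orbits[OF RX]) (use onto orbit_dense RX in auto)
  moreover have "minimal_on R g"
  proof (rule minimal_on_if_dense_orbits[OF RX])
    show gR: "g ` R \<subseteq> R" using hom by (simp add: homeomorphism_image2)
    fix x assume x: "x \<in> R"
    have "X \<subseteq> closure (range (\<lambda>n. (g ^^ n) x))"
    proof (rule backward_orbit_dense)
      show "(g ^^ n) x \<in> X" for n using funpow_mem[OF gR x] RX by blast
      show "f ((g ^^ Suc n) x) = (g ^^ n) x" for n
        using homeomorphism_apply2[OF hom funpow_mem[OF gR x]] by simp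
    qed
    then show "X \<subseteq> closure {(g ^^ n) x | n. True}" by (simp add: full_SetCompr_eq)
  qed
  ultimately show ?thesis using that hom by blast
qed

end

theorem lemma5:
  fixes X :: "'a::metric_space set" and f :: "'a \<Rightarrow> 'a" and P :: "'a set"
  assumes "compact X"
    and "continuous_on X f" and "f ` X \<subseteq> X"
    and "minimal_on X f"
    and "P \<subseteq> X" and "residual_in X P"
  shows "\<exists>R. R \<subseteq> P \<inter> homeo_part X f \<and> residual_in X R
           \<and> f ` R = R \<and> R = {x\<in>X. f x \<in> R}
           \<and> (\<exists>g. homeomorphism R R f g \<and> minimal_on R f \<and> minimal_on R g)"
proof -
  interpret minimal_system X f using assms(1-4) by unfold_locales
  define Q where "Q = P - {y. \<exists>x\<in>X. \<exists>x'\<in>X. x \<noteq> x' \<and> f x = y \<and> f x' = y}"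
  define R where "R = {x\<in>X. full_orbit X f x \<subseteq> Q}"
  have "residual_in X Q"
    unfolding Q_def using assms(6) meagre_in_non_injective_points by (rule residual_in_Diff_meagre)
  then have residual: "residual_in X R" unfolding R_def by (rule residual_in_full_orbit_subset)
  have RX: "R \<subseteq> X" unfolding R_def by blast
  have RQ: "R \<subseteq> Q" unfolding R_def using self_in_full_orbit[of _ X f] by blast
  have fR: "f x \<in> R" if "x \<in> R" for x using that maps_to unfolding R_def by (auto simp: full_orbit_apply)
  have sat: "x \<in> R" if "x \<in> X" "f x \<in> R" for x using that unfolding R_def by (simp add: full_orbit_apply)
  have onto: "f ` R = R" using image_eq RX fR sat by (rule saturated_subset_image_eq)
  have inj: "inj_on f R"
  proof (rule inj_onI)
    fix x x' assume x: "x \<in> R" "x' \<in> R" "f x = f x'"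
    have "f x \<in> Q" using RQ fR[OF x(1)] by (rule subsetD)
    moreover have "x \<in> X" "x' \<in> X" using RX x(1,2) by auto
    ultimately show "x = x'" using x(3) unfolding Q_def by auto
  qed
  obtain g where "homeomorphism R R f g" "minimal_on R f" "minimal_on R g"
    by (rule saturated_restriction_minimal_homeomorphism[OF RX sat onto inj])
  moreover have "R \<subseteq> homeo_part X f"
    by (rule saturated_homeomorphism_subset_homeo_part[OF maps_to RX sat \<open>homeomorphism R R f g\<close>])
  moreover have "R = {x\<in>X. f x \<in> R}" using RX fR sat by blast
  moreover have "R \<subseteq> P" using RQ unfolding Q_def by blast
  ultimately show ?thesis using residual onto by blast
qed

end
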